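(* Every nonzero Lie algebra endomorphism of $\mathbb{W}_1$ is an automorphism; that is, $\mathrm{End}(\mathbb{W}_1)\setminus\{0\} = \mathrm{Aut}(\mathbb{W}_1)$.
   Context: $\Bbbk$ is a field of characteristic zero; $\mathbb{W}_1 = \mathrm{Der}(\Bbbk[t]) = \Bbbk[t]\partial$, $\partial = d/dt$, with bracket $[f\partial,g\partial] = (fg'-f'g)\partial$. $\mathrm{End}$ and $\mathrm{Aut}$ denote Lie algebra endomorphisms and automorphisms. *)

theory Defs
  imports "HOL-Computational_Algebra.Polynomial"
begin

text \<open>The Witt algebra W1 = Der(k[t]) = k[t] d/dt is modelled by identifying
  f d/dt with the polynomial f; the bracket is [f,g] = f g' - f' g.\<close>

definition witt_bracket :: "'a::field_char_0 poly \<Rightarrow> 'a poly \<Rightarrow> 'a poly" where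
  "witt_bracket f g = f * pderiv g - pderiv f * g"

definition witt_End :: "('a::field_char_0 poly \<Rightarrow> 'a poly) \<Rightarrow> bool" where
  "witt_End \<phi> \<longleftrightarrow>
     (\<forall>f g. \<phi> (f + g) = \<phi> f + \<phi> g) \<and>
     (\<forall>c f. \<phi> (smult c f) = smult c (\<phi> f)) \<and>
     (\<forall>f g. \<phi> (witt_bracket f g) = witt_bracket (\<phi> f) (\<phi> g))"

definition witt_Aut :: "('a::field_char_0 poly \<Rightarrow> 'a poly) \<Rightarrow> bool" where
  "witt_Aut \<phi> \<longleftrightarrow> witt_End \<phi> \<and> bij \<phi> \<and> witt_End (inv \<phi>)"

end

theory Submission
  imports Defs
begin

text \<open>A bracket-preserving linear map \<open>\<phi>\<close> is determined by the images of the basis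
  fields \<open>t\<^sup>n\<partial>\<close>, and \<open>h = \<phi>(t\<partial>)\<close> acts on \<open>\<phi>(t\<^sup>n\<partial>)\<close> with eigenvalue \<open>n - 1\<close>.
  A field \<open>h\<close> of degree \<open>k \<ge> 2\<close> with an ad-eigenvector of eigenvalue \<open>\<mu> \<noteq> 0\<close> satisfies
  \<open>(t - r) h' = k h - \<mu> (t - r)\<close>, which is incompatible with having the three eigenvalues
  \<open>-1, 1, 2\<close>, and a constant field has no nonzero eigenvalue; hence \<open>h\<close> is affine.
  Comparing leading coefficients then shows \<open>\<phi>(\<partial>) = c\<partial>\<close> with \<open>c \<noteq> 0\<close> and
  \<open>h = (t + b)\<partial>\<close>, and the relations \<open>[\<partial>, t\<^sup>n\<^sup>+\<^sup>1\<partial>] = (n+1) t\<^sup>n\<partial>\<close> force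
  \<open>\<phi>(p\<partial>) = c p((t + b)/c) \<partial>\<close>, a substitution by an affine polynomial, which is invertible.\<close>

lemma witt_bracket_self [simp]: "witt_bracket f f = 0"
  by (simp add: witt_bracket_def mult.commute)

lemma witt_bracket_0_left [simp]: "witt_bracket 0 g = 0"
  and witt_bracket_0_right [simp]: "witt_bracket f 0 = 0"
  by (simp_all add: witt_bracket_def)

lemma witt_bracket_diff_right:
  "witt_bracket f (g - h) = witt_bracket f g - witt_bracket f h"
  by (simp add: witt_bracket_def pderiv_diff algebra_simps)

lemma witt_bracket_smult_right:
  "witt_bracket f (smult c g) = smult c (witt_bracket f g)"
  by (simp add: witt_bracket_def pderiv_smult smult_diff_right)

lemma witt_bracket_one_monom:
  "witt_bracket 1 (monom 1 (Suc n)) = smult (of_nat (Suc n)) (monom (1::'a::field_char_0) n)"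
  by (simp add: witt_bracket_def pderiv_monom smult_monom)

lemma witt_bracket_t_monom:
  "witt_bracket (monom 1 1) (monom 1 n) = smult (of_nat n - 1) (monom (1::'a::field_char_0) n)"
  by (cases n) (auto simp: witt_bracket_def pderiv_monom smult_monom mult_monom poly_eq_iff
      coeff_monom coeff_pCons split: nat.split)

lemma degree_mult_pderiv_le:
  fixes p q :: "'a::field_char_0 poly"
  shows "degree (p * pderiv q) \<le> degree p + degree q - 1"
proof (cases "degree q = 0")
  case True
  then have "pderiv q = 0" by (simp add: pderiv_eq_0_iff)
  then show ?thesis by simp
next
  case False
  then show ?thesis
    using degree_mult_le[of p "pderiv q"] by (simp add: degree_pderiv)
qed

lemma coeff_mult_pderiv_top:
  fixes p q :: "'a::field_char_0 poly"
  shows "coeff (p * pderiv q) (degree p + degree q - 1) = of_nat (degree q) * lead_coeff p * lead_coeff q"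
proof (cases "degree q = 0")
  case True
  then have "pderiv q = 0" by (simp add: pderiv_eq_0_iff)
  with True show ?thesis by simp
next
  case False
  then have "coeff (p * pderiv q) (degree p + degree (pderiv q)) = lead_coeff p * lead_coeff (pderiv q)"
    by (intro coeff_mult_degree_sum)
  with False show ?thesis by (simp add: degree_pderiv coeff_pderiv algebra_simps)
qed

lemma degree_witt_bracket_le:
  fixes f g :: "'a::field_char_0 poly"
  shows "degree (witt_bracket f g) \<le> degree f + degree g - 1"
  unfolding witt_bracket_def
  using degree_mult_pderiv_le[of f g] degree_mult_pderiv_le[of g f]
  by (metis add.commute degree_diff_le mult.commute)

lemma coeff_witt_bracket_top:
  fixes f g :: "'a::field_char_0 poly"
  shows "coeff (witt_bracket f g) (degree f + degree g - 1)
     = (of_nat (degree g) - of_nat (degree f)) * lead_coeff f * lead_coeff g"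
  using coeff_mult_pderiv_top[of f g] coeff_mult_pderiv_top[of g f]
  by (simp add: witt_bracket_def mult.commute add.commute algebra_simps)

lemma degree_witt_bracket:
  fixes f g :: "'a::field_char_0 poly"
  assumes "f \<noteq> 0" "g \<noteq> 0" "degree f \<noteq> degree g"
  shows "degree (witt_bracket f g) = degree f + degree g - 1"
proof (rule antisym)
  have "coeff (witt_bracket f g) (degree f + degree g - 1) \<noteq> 0"
    unfolding coeff_witt_bracket_top using assms by simp
  then show "degree f + degree g - 1 \<le> degree (witt_bracket f g)"
    by (rule le_degree)
qed (rule degree_witt_bracket_le)

lemma ad_eigenvector_degree:
  fixes h x :: "'a::field_char_0 poly"
  assumes "degree h \<ge> 2" "x \<noteq> 0" "\<mu> \<noteq> 0" "witt_bracket h x = smult \<mu> x"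
  shows "degree x = degree h"
proof (rule ccontr)
  assume "degree x \<noteq> degree h"
  then have "degree (witt_bracket h x) = degree h + degree x - 1"
    using assms by (intro degree_witt_bracket) auto
  with assms show False by simp
qed

text \<open>Subtracting from \<open>x\<close> the multiple of \<open>h\<close> with the same leading term leaves a
  polynomial whose bracket with \<open>h\<close> still has degree \<open>degree h\<close>, so it is linear, say
  \<open>\<alpha> (t - r)\<close>. Comparing both sides of the eigenvalue equation then gives a first order
  linear differential equation for \<open>h\<close>.\<close>

lemma ad_eigenvector_ode:
  fixes h x :: "'a::field_char_0 poly"
  assumes h2: "degree h \<ge> 2" and x0: "x \<noteq> 0" and \<mu>0: "\<mu> \<noteq> 0"
    and eig: "witt_bracket h x = smult \<mu> x"
  obtains r where "[:-r, 1:] * pderiv h = smult (of_nat (degree h)) h - smult \<mu> [:-r, 1:]"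
proof -
  define k :: 'a where "k = of_nat (degree h)"
  have h0: "h \<noteq> 0" using h2 by auto
  have deg_x: "degree x = degree h" using ad_eigenvector_degree[OF assms] .
  define g where "g = lead_coeff x / lead_coeff h"
  define y where "y = x - smult g h"
  have "coeff y (degree h) = 0"
    unfolding y_def g_def using h0 deg_x by simp
  then have deg_y_less: "degree y \<noteq> degree h" if "y \<noteq> 0"
    using that by (metis leading_coeff_0_iff)
  have eig_y: "witt_bracket h y = smult \<mu> x"
    unfolding y_def using eig by (simp add: witt_bracket_diff_right witt_bracket_smult_right)
  then have "y \<noteq> 0" using \<mu>0 x0 by auto
  then have "degree (witt_bracket h y) = degree h + degree y - 1"
    using h0 deg_y_less by (intro degree_witt_bracket) auto
  with eig_y \<mu>0 deg_x h2 have "degree y = 1" by simp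
  then obtain \<beta> \<alpha> where y: "y = [:\<beta>, \<alpha>:]" and \<alpha>0: "\<alpha> \<noteq> 0"
    by (rule degree1_coeffs)
  define r where "r = - \<beta> / \<alpha>"
  define l where "l = [:-r, 1:]"
  have y_l: "y = smult \<alpha> l" unfolding y l_def r_def using \<alpha>0 by simp
  have "pderiv l = 1" unfolding l_def by (simp add: pderiv_pCons)
  have "coeff (witt_bracket h y) (degree h + degree y - 1) = coeff (smult \<mu> x) (degree h)"
    using eig_y \<open>degree y = 1\<close> by simp
  then have "(1 - k) * lead_coeff h * \<alpha> = \<mu> * g * lead_coeff h"
    unfolding coeff_witt_bracket_top using \<open>degree y = 1\<close> h0 deg_x
    by (simp add: k_def y g_def)
  then have lead: "\<mu> * g = (1 - k) * \<alpha>"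
    using h0 by (simp add: mult.commute mult.left_commute)
  have "x = smult g h + smult \<alpha> l"
    using y_l unfolding y_def by (simp add: algebra_simps)
  with eig_y have "smult \<alpha> h - smult \<alpha> (l * pderiv h) = smult (\<mu> * g) h + smult (\<mu> * \<alpha>) l"
    unfolding y_l by (simp add: witt_bracket_def pderiv_smult \<open>pderiv l = 1\<close> smult_add_right algebra_simps)
  then have "smult \<alpha> (l * pderiv h) = smult \<alpha> (smult k h - smult \<mu> l)"
    unfolding lead by (simp add: algebra_simps smult_diff_right smult_diff_left)
  then have "l * pderiv h = smult k h - smult \<mu> l"
    using \<alpha>0 by (rule smult_cancel[rotated])
  then show ?thesis
    unfolding l_def k_def by (rule that)
qed

lemma affine_ode_root_values:
  fixes h :: "'a::field_char_0 poly"
  assumes ode: "[:-r, 1:] * pderiv h = smult k h - smult \<mu> [:-r, 1:]" and k0: "k \<noteq> 0"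
  shows "poly h r = 0"
    and "(k - 1) * poly (pderiv h) r = \<mu>"
    and "poly h s = 0 \<Longrightarrow> s \<noteq> r \<Longrightarrow> poly (pderiv h) s = - \<mu>"
proof -
  have eval: "(s - r) * poly (pderiv h) s = k * poly h s - \<mu> * (s - r)" for s
    using arg_cong[OF ode, of "\<lambda>p. poly p s"] by (simp add: algebra_simps)
  show "poly h r = 0"
    using eval[of r] k0 by simp
  have "pderiv ([:-r, 1:] * pderiv h) = pderiv (smult k h - smult \<mu> [:-r, 1:])"
    using ode by simp
  then have "[:-r, 1:] * pderiv (pderiv h) + pderiv h = smult k (pderiv h) - [:\<mu>:]"
    by (simp add: pderiv_mult pderiv_diff pderiv_smult pderiv_pCons algebra_simps)
  from arg_cong[OF this, of "\<lambda>p. poly p r"]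
  show "(k - 1) * poly (pderiv h) r = \<mu>"
    by (simp add: algebra_simps)
  show "poly (pderiv h) s = - \<mu>" if "poly h s = 0" "s \<noteq> r"
  proof -
    have "(s - r) * poly (pderiv h) s = (s - r) * - \<mu>"
      using eval[of s] that(1) by simp
    with that(2) show ?thesis by (metis mult_left_cancel right_minus_eq)
  qed
qed

text \<open>For \<open>degree h = k \<ge> 2\<close>, eigenvalues \<open>-1\<close> and \<open>\<mu>\<close> give two roots \<open>r\<^sub>1 \<noteq> r\<^sub>\<mu>\<close> of
  \<open>h\<close>, and evaluating \<open>h'\<close> at \<open>r\<^sub>\<mu>\<close> through both equations forces \<open>k - 1 = \<mu>\<close>;
  this cannot hold for both \<open>\<mu> = 1\<close> and \<open>\<mu> = 2\<close>.\<close>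

lemma degree_le_1_if_ad_eigenvalues:
  fixes h x\<^sub>1 x\<^sub>2 x\<^sub>3 :: "'a::field_char_0 poly"
  assumes "x\<^sub>1 \<noteq> 0" "x\<^sub>2 \<noteq> 0" "x\<^sub>3 \<noteq> 0"
    and "witt_bracket h x\<^sub>1 = smult (-1) x\<^sub>1"
    and "witt_bracket h x\<^sub>2 = smult 1 x\<^sub>2"
    and "witt_bracket h x\<^sub>3 = smult 2 x\<^sub>3"
  shows "degree h \<le> 1"
proof (rule ccontr)
  assume "\<not> degree h \<le> 1"
  then have h2: "degree h \<ge> 2" by simp
  define k :: 'a where "k = of_nat (degree h)"
  have k0: "k \<noteq> 0" using h2 by (simp add: k_def)
  obtain r\<^sub>1 where ode\<^sub>1: "[:-r\<^sub>1, 1:] * pderiv h = smult k h - smult (-1) [:-r\<^sub>1, 1:]"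
    using ad_eigenvector_ode[OF h2 assms(1) _ assms(4)] k_def by auto
  have k_eq: "k - 1 = \<mu>"
    if eig: "\<mu> \<noteq> 0" "\<mu> \<noteq> -1" "x \<noteq> 0" "witt_bracket h x = smult \<mu> x" for \<mu> x
  proof -
    obtain r where ode: "[:-r, 1:] * pderiv h = smult k h - smult \<mu> [:-r, 1:]"
      using ad_eigenvector_ode[OF h2 eig(3,1,4)] k_def by auto
    note at\<^sub>1 = affine_ode_root_values[OF ode\<^sub>1 k0] and at = affine_ode_root_values[OF ode k0]
    have "r \<noteq> r\<^sub>1" using at\<^sub>1(2) at(2) eig(2) by auto
    then have "poly (pderiv h) r = 1" using at\<^sub>1(3)[OF at(1)] by simp
    with at(2) show ?thesis by simp
  qed
  have "k - 1 = 1" using k_eq[OF _ _ assms(2,5)] by simp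
  moreover have "k - 1 = 2" using k_eq[OF _ _ assms(3,6)] by simp
  ultimately show False by simp
qed

lemma ad_eigenvalue_degree_0:
  fixes h x :: "'a::field_char_0 poly"
  assumes "degree h = 0" "x \<noteq> 0" "witt_bracket h x = smult \<mu> x"
  shows "\<mu> = 0"
proof -
  have "pderiv h = 0" using assms(1) by (simp add: pderiv_eq_0_iff)
  then have "smult \<mu> x = h * pderiv x" using assms(3) by (simp add: witt_bracket_def)
  moreover have "coeff (h * pderiv x) (degree x) = 0"
  proof (cases "degree x = 0")
    case True
    then have "pderiv x = 0" by (simp add: pderiv_eq_0_iff)
    then show ?thesis by simp
  next
    case False
    then show ?thesis
      using degree_mult_pderiv_le[of h x] assms(1) by (intro coeff_eq_0) simp
  qed
  ultimately have "\<mu> * lead_coeff x = 0" by (metis coeff_smult)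
  with assms(2) show ?thesis by simp
qed

lemma ad_eigenvalue_degree_1:
  fixes h x :: "'a::field_char_0 poly"
  assumes "degree h = 1" "x \<noteq> 0" "witt_bracket h x = smult \<mu> x"
  shows "(of_nat (degree x) - 1) * lead_coeff h = \<mu>"
proof -
  have "\<mu> * lead_coeff x = (of_nat (degree x) - 1) * lead_coeff h * lead_coeff x"
    using coeff_witt_bracket_top[of h x] assms(1,3) by simp
  with assms(2) show ?thesis by simp
qed

lemma pcompose_monom: "monom a n \<circ>\<^sub>p q = smult a (q ^ n)"
  by (induction n) (simp_all add: monom_0 monom_Suc pcompose_pCons)

lemma poly_linear_map_eqI:
  fixes \<phi> \<psi> :: "'a::comm_ring_1 poly \<Rightarrow> 'a poly"
  assumes "\<And>f g. \<phi> (f + g) = \<phi> f + \<phi> g" "\<And>c f. \<phi> (smult c f) = smult c (\<phi> f)"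
    and "\<And>f g. \<psi> (f + g) = \<psi> f + \<psi> g" "\<And>c f. \<psi> (smult c f) = smult c (\<psi> f)"
    and "\<And>n. \<phi> (monom 1 n) = \<psi> (monom 1 n)"
  shows "\<phi> = \<psi>"
proof -
  have expand: "\<chi> p = (\<Sum>i\<le>degree p. smult (coeff p i) (\<chi> (monom 1 i)))"
    if add: "\<And>f g. \<chi> (f + g) = \<chi> f + \<chi> g" and hom: "\<And>c f. \<chi> (smult c f) = smult c (\<chi> f)"
    for \<chi> :: "'a poly \<Rightarrow> 'a poly" and p
  proof -
    have "\<chi> 0 = 0" using hom[of 0 0] by simp
    have "\<chi> p = \<chi> (\<Sum>i\<le>degree p. smult (coeff p i) (monom 1 i))"
      by (simp add: smult_monom poly_as_sum_of_monoms)
    also have "\<dots> = (\<Sum>i\<le>degree p. \<chi> (smult (coeff p i) (monom 1 i)))"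
      by (rule sum_comp_morphism[of \<chi>, OF \<open>\<chi> 0 = 0\<close> add, unfolded o_def, symmetric])
    finally show ?thesis by (simp add: hom)
  qed
  show ?thesis
  proof
    fix p
    show "\<phi> p = \<psi> p"
      using expand[OF assms(1,2), of p] expand[OF assms(3,4), of p] by (simp add: assms(5))
  qed
qed

lemma
  assumes "witt_End \<phi>"
  shows witt_End_add: "\<phi> (f + g) = \<phi> f + \<phi> g"
    and witt_End_smult: "\<phi> (smult c f) = smult c (\<phi> f)"
    and witt_End_bracket: "\<phi> (witt_bracket f g) = witt_bracket (\<phi> f) (\<phi> g)"
  using assms unfolding witt_End_def by blast+

lemma witt_End_inv:
  assumes "witt_End \<phi>" "bij \<phi>"
  shows "witt_End (inv \<phi>)"
proof -
  have inv_eqI: "inv \<phi> y = x" if "\<phi> x = y" for x y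
    using that assms(2) by (metis bij_is_inj inv_f_f)
  have surj: "\<phi> (inv \<phi> y) = y" for y
    using assms(2) by (simp add: bij_is_surj surj_f_inv_f)
  show ?thesis
    unfolding witt_End_def
    by (intro conjI allI inv_eqI)
      (simp_all add: witt_End_add[OF assms(1)] witt_End_smult[OF assms(1)]
        witt_End_bracket[OF assms(1)] surj)
qed

lemma witt_End_bracket_one_monom:
  assumes "witt_End \<phi>"
  shows "witt_bracket (\<phi> 1) (\<phi> (monom 1 (Suc n))) = smult (of_nat (Suc n)) (\<phi> (monom 1 n))"
  using witt_End_bracket[OF assms, of 1 "monom 1 (Suc n)"]
  by (simp add: witt_bracket_one_monom witt_End_smult[OF assms])

lemma witt_End_bracket_t_monom:
  assumes "witt_End \<phi>"
  shows "witt_bracket (\<phi> (monom 1 1)) (\<phi> (monom 1 n)) = smult (of_nat n - 1) (\<phi> (monom 1 n))"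
  by (simp only: witt_End_bracket[OF assms, symmetric] witt_bracket_t_monom witt_End_smult[OF assms])

lemma witt_End_monom_nonzero:
  assumes End: "witt_End \<phi>" and nz: "\<phi> \<noteq> (\<lambda>_. 0)"
  shows "\<phi> (monom 1 n) \<noteq> 0"
proof -
  have down: "\<phi> (monom 1 n) = 0" if "\<phi> 1 = 0 \<or> \<phi> (monom 1 (Suc n)) = 0" for n
  proof -
    have "smult (of_nat (Suc n)) (\<phi> (monom 1 n)) = 0"
      using that unfolding witt_End_bracket_one_monom[OF End, of n, symmetric] by auto
    then show ?thesis by (metis of_nat_neq_0 smult_eq_0_iff)
  qed
  have "\<phi> 1 \<noteq> 0"
  proof
    assume "\<phi> 1 = 0"
    then have monom_zero: "\<phi> (monom 1 n) = 0" for n using down[of n] by blast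
    have "\<phi> = (\<lambda>_. 0)"
      by (rule poly_linear_map_eqI) (simp_all add: monom_zero witt_End_add[OF End] witt_End_smult[OF End])
    with nz show False ..
  qed
  then show ?thesis
  proof (induction n)
    case (Suc n)
    then show ?case using down[of n] by blast
  qed simp
qed

lemma witt_End_image_one_and_t:
  fixes \<phi> :: "'a::field_char_0 poly \<Rightarrow> 'a poly"
  assumes End: "witt_End \<phi>" and nz: "\<phi> \<noteq> (\<lambda>_. 0)"
  obtains b c where "c \<noteq> 0" "\<phi> 1 = [:c:]" "\<phi> (monom 1 1) = [:b, 1:]"
proof -
  define h where "h = \<phi> (monom 1 1)"
  note nonzero = witt_End_monom_nonzero[OF End nz]
  have eig: "witt_bracket h (\<phi> (monom 1 n)) = smult (of_nat n - 1) (\<phi> (monom 1 n))" for n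
    unfolding h_def by (rule witt_End_bracket_t_monom[OF End])
  have eig\<^sub>0: "witt_bracket h (\<phi> 1) = smult (-1) (\<phi> 1)"
    using eig[of 0] by simp
  have eig\<^sub>3: "witt_bracket h (\<phi> (monom 1 3)) = smult 2 (\<phi> (monom 1 3))"
    using eig[of 3] by simp
  have "degree h \<le> 1"
    using eig[of 2] eig\<^sub>0 eig\<^sub>3 nonzero[of 0] nonzero[of 2] nonzero[of 3]
    by (intro degree_le_1_if_ad_eigenvalues[of "\<phi> 1" "\<phi> (monom 1 2)" "\<phi> (monom 1 3)"]) simp_all
  moreover have "degree h \<noteq> 0"
    using ad_eigenvalue_degree_0[of h "\<phi> 1" "-1"] eig\<^sub>0 nonzero[of 0] by auto
  ultimately have deg_h: "degree h = 1" by simp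
  define d\<^sub>0 d\<^sub>3 where "d\<^sub>0 = degree (\<phi> 1)" and "d\<^sub>3 = degree (\<phi> (monom 1 3))"
  have lc\<^sub>0: "(of_nat d\<^sub>0 - 1) * lead_coeff h = -1"
    using ad_eigenvalue_degree_1[OF deg_h _ eig\<^sub>0] nonzero[of 0] by (simp add: d\<^sub>0_def)
  have lc\<^sub>3: "(of_nat d\<^sub>3 - 1) * lead_coeff h = 2"
    using ad_eigenvalue_degree_1[OF deg_h nonzero[of 3] eig\<^sub>3] by (simp add: d\<^sub>3_def)
  have "(of_nat d\<^sub>3 - 1) * lead_coeff h = (-2 * (of_nat d\<^sub>0 - 1)) * lead_coeff h"
    by (simp only: mult.assoc lc\<^sub>0 lc\<^sub>3) simp
  moreover have "lead_coeff h \<noteq> 0" using lc\<^sub>0 by auto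
  ultimately have "(of_nat d\<^sub>3 - 1 :: 'a) = -2 * (of_nat d\<^sub>0 - 1)" by simp
  then have "(of_nat (d\<^sub>3 + 2 * d\<^sub>0) :: 'a) = of_nat 3"
    by (simp add: algebra_simps)
  then have "d\<^sub>3 + 2 * d\<^sub>0 = 3" by (simp only: of_nat_eq_iff)
  moreover have "d\<^sub>0 \<noteq> 1" using lc\<^sub>0 by auto
  ultimately have "d\<^sub>0 = 0" by linarith
  with lc\<^sub>0 have lc_h: "lead_coeff h = 1" by simp
  obtain c where c: "\<phi> 1 = [:c:]"
    using \<open>d\<^sub>0 = 0\<close> degree0_coeffs unfolding d\<^sub>0_def by blast
  moreover have "c \<noteq> 0" using c nonzero[of 0] by auto
  moreover obtain b a where "h = [:b, a:]" "a \<noteq> 0"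
    using deg_h by (rule degree1_coeffs)
  ultimately show ?thesis
    using that lc_h unfolding h_def by auto
qed

lemma witt_End_eq_smult_pcompose:
  fixes \<phi> :: "'a::field_char_0 poly \<Rightarrow> 'a poly"
  assumes End: "witt_End \<phi>" and c0: "c \<noteq> 0"
    and one: "\<phi> 1 = [:c:]" and t: "\<phi> (monom 1 1) = [:b, 1:]"
  shows "\<phi> = (\<lambda>p. smult c (p \<circ>\<^sub>p [:b / c, 1 / c:]))"
proof -
  define u where "u = [:b / c, 1 / c:]"
  have t_u: "[:b, 1:] = smult c u" unfolding u_def using c0 by simp
  have monom: "\<phi> (monom 1 n) = smult c (u ^ n)" for n
  proof (induction n)
    case 0
    show ?case using one by simp
  next
    case (Suc n)
    define y where "y = \<phi> (monom 1 (Suc n))"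
    have y': "smult c (pderiv y) = smult (of_nat (Suc n)) (\<phi> (monom 1 n))"
      using witt_End_bracket_one_monom[OF End, of n] by (simp add: one witt_bracket_def y_def)
    have "witt_bracket [:b, 1:] y = smult (of_nat n) y"
      using witt_End_bracket_t_monom[OF End, of "Suc n"] unfolding t y_def by simp
    then have "[:b, 1:] * pderiv y = smult (of_nat (Suc n)) y"
      by (simp add: witt_bracket_def pderiv_pCons algebra_simps smult_add_left del: mult_pCons_left)
    then have "smult (of_nat (Suc n)) (smult c y) = smult (of_nat (Suc n)) ([:b, 1:] * \<phi> (monom 1 n))"
      using y' by (metis mult_smult_right smult_smult mult.commute)
    then have "smult c y = [:b, 1:] * \<phi> (monom 1 n)"
      by (metis of_nat_neq_0 smult_cancel)
    also have "\<dots> = smult c (smult c (u ^ Suc n))"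
      by (simp add: t_u Suc.IH)
    finally show ?case
      using c0 unfolding y_def by (metis smult_cancel)
  qed
  show ?thesis
    unfolding u_def[symmetric]
    by (rule poly_linear_map_eqI)
      (simp_all add: witt_End_add[OF End] witt_End_smult[OF End] monom pcompose_monom
        pcompose_add pcompose_smult smult_add_right mult.commute)
qed

lemma bij_smult_pcompose:
  fixes u :: "'a::field poly"
  assumes "c \<noteq> 0" "degree u = 1"
  shows "bij (\<lambda>p. smult c (p \<circ>\<^sub>p u))"
proof -
  obtain a b where u: "u = [:b, a:]" and "a \<noteq> 0"
    using assms(2) by (rule degree1_coeffs)
  define v where "v = [:- b / a, 1 / a:]"
  have "u \<circ>\<^sub>p v = [:0, 1:]" "v \<circ>\<^sub>p u = [:0, 1:]"
    unfolding u v_def using \<open>a \<noteq> 0\<close> by (simp_all add: pcompose_pCons field_simps)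
  then have "(\<lambda>q. smult (inverse c) (q \<circ>\<^sub>p v)) \<circ> (\<lambda>p. smult c (p \<circ>\<^sub>p u)) = id"
    and "(\<lambda>p. smult c (p \<circ>\<^sub>p u)) \<circ> (\<lambda>q. smult (inverse c) (q \<circ>\<^sub>p v)) = id"
    using assms(1) by (simp_all add: fun_eq_iff pcompose_smult flip: pcompose_assoc)
  then show ?thesis by (rule o_bij)
qed

theorem mainTheorem12:
  "{\<phi> :: 'a::field_char_0 poly \<Rightarrow> 'a poly. witt_End \<phi> \<and> \<phi> \<noteq> (\<lambda>_. 0)}
     = {\<phi>. witt_Aut \<phi>}"
proof (intro set_eqI iffI; clarsimp)
  fix \<phi> :: "'a poly \<Rightarrow> 'a poly"
  assume End: "witt_End \<phi>" and nz: "\<phi> \<noteq> (\<lambda>_. 0)"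
  obtain b c where "c \<noteq> 0" "\<phi> 1 = [:c:]" "\<phi> (monom 1 1) = [:b, 1:]"
    using witt_End_image_one_and_t[OF End nz] .
  then have "\<phi> = (\<lambda>p. smult c (p \<circ>\<^sub>p [:b / c, 1 / c:]))"
    by (intro witt_End_eq_smult_pcompose[OF End])
  with \<open>c \<noteq> 0\<close> have "bij \<phi>"
    by (simp add: bij_smult_pcompose)
  then show "witt_Aut \<phi>"
    unfolding witt_Aut_def using End witt_End_inv by blast
next
  fix \<phi> :: "'a poly \<Rightarrow> 'a poly"
  assume "witt_Aut \<phi>"
  then have "witt_End \<phi>" "surj \<phi>"
    unfolding witt_Aut_def by (auto simp: bij_is_surj)
  then show "witt_End \<phi> \<and> \<phi> \<noteq> (\<lambda>_. 0)"
    by (metis one_neq_zero surjD)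
qed

end
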